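(* Let $r>1$, let $V:\mathbb{R}\to\mathbb{R}$ be convex and $L$-Lipschitz with $V'$ also $L$-Lipschitz, such that $m:=e^{-V}$ is a probability density, and let $\rho=e^{-(r+1)V}$. Let $0<c<C<\infty$ and $f\in\mathcal{P}_{c,C}$. Then there exists a constant $\lambda\ge 0$ depending only on $V$, $c$ and $C$ such that the functional $\mathcal{F}_\rho[g]:=\int_{\mathbb{R}}\frac{\rho(x)}{g(x)^r}\,dx$ is $(-\lambda)$-convex along the $W_2$-geodesic $(\mu_t)_{t\in[0,1]}$ linking $m$ and $f$, i.e. for all $t\in[0,1]$, $$\mathcal{F}_\rho[\mu_t]\le (1-t)\mathcal{F}_\rho[\mu_0]+t\,\mathcal{F}_\rho[\mu_1]+\frac{\lambda}{2}t(1-t)W_2(m,f)^2 .$$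
   Context: $\mathcal{P}_{c,C}:=\{g\in\mathcal{P}(\mathbb{R}):\ c\,m\le g\le C\,m\}$. $W_2$ is the quadratic Wasserstein distance: $W_2(\mu,\nu)^2=\inf_\pi\int|x-y|^2\,d\pi$ over couplings $\pi$ of $\mu,\nu$. The $W_2$-geodesic from $\mu_0=m$ to $\mu_1=f$ is $\mu_t=((1-t)\mathrm{id}+tT)_\# m$, where $T=F_f^{-1}\circ F_m$ is the (monotone) optimal transport map from $m$ to $f$, $F$ denoting cumulative distribution functions. *)

theory Defs
  imports "HOL-Probability.Probability"
begin

definition quantile :: "real measure \<Rightarrow> real \<Rightarrow> real" where
  "quantile M u = Inf {x. u \<le> cdf M x}"

definition ot_map :: "real measure \<Rightarrow> real measure \<Rightarrow> real \<Rightarrow> real" where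
  "ot_map \<mu> \<nu> = quantile \<nu> \<circ> cdf \<mu>"

definition w2_geodesic :: "real measure \<Rightarrow> real measure \<Rightarrow> real \<Rightarrow> real measure" where
  "w2_geodesic \<mu> \<nu> t = distr \<mu> lborel (\<lambda>x. (1 - t) * x + t * ot_map \<mu> \<nu> x)"

definition couplings :: "real measure \<Rightarrow> real measure \<Rightarrow> (real \<times> real) measure set" where
  "couplings \<mu> \<nu> = {\<pi>. prob_space \<pi> \<and> sets \<pi> = sets (borel :: (real \<times> real) measure) \<and>
      distr \<pi> borel fst = \<mu> \<and> distr \<pi> borel snd = \<nu>}"

definition W2sq :: "real measure \<Rightarrow> real measure \<Rightarrow> ennreal" where
  "W2sq \<mu> \<nu> = (INF \<pi> \<in> couplings \<mu> \<nu>. \<integral>\<^sup>+ p. ennreal ((fst p - snd p)\<^sup>2) \<partial>\<pi>)"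

definition is_density :: "real measure \<Rightarrow> (real \<Rightarrow> real) \<Rightarrow> bool" where
  "is_density \<mu> g \<longleftrightarrow> g \<in> borel_measurable borel \<and> (\<forall>x. 0 \<le> g x) \<and> \<mu> = density lborel g"

definition Frho :: "real \<Rightarrow> (real \<Rightarrow> real) \<Rightarrow> real measure \<Rightarrow> ennreal" where
  "Frho r \<rho> \<mu> = (if \<exists>g. is_density \<mu> g then
      (let g = (SOME g. is_density \<mu> g) in
        \<integral>\<^sup>+ x. (if 0 < g x then ennreal (\<rho> x / g x powr r) else \<infinity>) \<partial>lborel)
    else \<infinity>)"

definition Pcc :: "(real \<Rightarrow> real) \<Rightarrow> real \<Rightarrow> real \<Rightarrow> (real \<Rightarrow> real) set" where
  "Pcc m c C = {g. g \<in> borel_measurable borel \<and> (g has_integral 1) UNIV \<and>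
      (\<forall>x. c * m x \<le> g x \<and> g x \<le> C * m x)}"

end

theory Submission
  imports Defs
begin

(* In one dimension the geodesic is explicit: mu_t is the image of m under
   T_t = (1 - t) id + t T, where T = F_f^-1 o F_m is the monotone map, and T_t has the weak
   derivative J_t = (1 - t) + t m / (f o T). Changing variables,
     F_rho[mu_t] = int m(x) J_t(x)^p exp (p (V x - V (T_t x))) dx,   p = r + 1,
   and the integrand is l^p v^(1 - p) with l = J_t(x), affine in t, and
   v = exp (q (V (T_t x) - V x)), q = p / (p - 1). The perspective (l, v) |-> l^p v^(1 - p) is
   jointly convex, and v is concave in t up to an error of order t (1 - t) |T x - x|^2 because
   V' is Lipschitz. The comparison c m <= f <= C m and the exponential tails of the log-concave
   density m bound |T x - x| and J_1 uniformly, so the total error is at most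
   lambda/2 t (1 - t) |T x - x|^2 with lambda depending only on V, c, C and r. Integrating
   against m and using the optimality of the monotone coupling,
   int |x - T x|^2 dm <= W_2(m, f)^2, gives the claim. *)

section \<open>Convexity inequalities on the real line\<close>

lemma semiconcave_interpolation:
  fixes g g' :: "real \<Rightarrow> real" and M t :: real
  assumes deriv: "\<And>s. s \<in> {0..1} \<Longrightarrow> (g has_real_derivative g' s) (at s)"
    and deriv_lip: "\<And>s1 s2. 0 \<le> s1 \<Longrightarrow> s1 \<le> s2 \<Longrightarrow> s2 \<le> 1 \<Longrightarrow> g' s2 - g' s1 \<le> M * (s2 - s1)"
    and t: "0 \<le> t" "t \<le> 1"
  shows "(1 - t) * g 0 + t * g 1 - M / 2 * t * (1 - t) \<le> g t"
proof -
  let ?k = "\<lambda>s. M / 2 * s\<^sup>2 - g s"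
  have "convex_on {0..1} ?k"
  proof (rule convex_on_realI[where f' = "\<lambda>s. M * s - g' s"])
    show "(?k has_real_derivative M * s - g' s) (at s)" if "s \<in> {0..1}" for s
      using deriv[OF that] by (auto intro!: derivative_eq_intros)
    show "M * s1 - g' s1 \<le> M * s2 - g' s2" if "s1 \<in> {0..1}" "s2 \<in> {0..1}" "s1 \<le> s2" for s1 s2
      using deriv_lip[of s1 s2] that by (auto simp: algebra_simps)
  qed simp
  then have "?k ((1 - t) * 0 + t * 1) \<le> (1 - t) * ?k 0 + t * ?k 1"
    using convex_onD[of "{0..1}" ?k t 0 1] t by simp
  then show ?thesis by (simp add: power2_eq_square field_simps)
qed

lemma exp_semiconcave:
  fixes z Z t :: real
  assumes zZ: "\<bar>z\<bar> \<le> Z" and t: "0 \<le> t" "t \<le> 1"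
  shows "(1 - t) + t * exp z - z\<^sup>2 * exp Z / 2 * t * (1 - t) \<le> exp (t * z)"
proof -
  have deriv: "((\<lambda>s. exp (s * z)) has_real_derivative z * exp (s * z)) (at s)" for s
    by (auto intro!: derivative_eq_intros)
  have "z * exp (s2 * z) - z * exp (s1 * z) \<le> z\<^sup>2 * exp Z * (s2 - s1)"
    if "0 \<le> s1" "s1 \<le> s2" "s2 \<le> 1" for s1 s2
  proof (cases "s1 = s2")
    case False
    with that have "s1 < s2" by simp
    from MVT2[OF this deriv] obtain \<xi>
      where \<xi>: "s1 < \<xi>" "\<xi> < s2" "exp (s2 * z) - exp (s1 * z) = (s2 - s1) * (z * exp (\<xi> * z))"
      by blast
    have "\<xi> * z \<le> \<xi> * \<bar>z\<bar>" using \<xi> that by (intro mult_left_mono) auto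
    also have "\<dots> \<le> 1 * Z" using \<xi> that zZ by (intro mult_mono) auto
    finally have "\<xi> * z \<le> Z" by simp
    have "z * exp (s2 * z) - z * exp (s1 * z) = z * (exp (s2 * z) - exp (s1 * z))"
      by (simp add: right_diff_distrib)
    also have "\<dots> = z\<^sup>2 * exp (\<xi> * z) * (s2 - s1)"
      unfolding \<xi>(3) by (simp add: power2_eq_square)
    also have "\<dots> \<le> z\<^sup>2 * exp Z * (s2 - s1)"
      using \<xi> \<open>\<xi> * z \<le> Z\<close> by (intro mult_right_mono mult_left_mono) auto
    finally show ?thesis .
  qed simp
  from semiconcave_interpolation[of "\<lambda>s. exp (s * z)", OF deriv this t] show ?thesis
    by (simp add: mult.commute)
qed

lemma perspective_powr_convex:
  fixes l0 l1 w0 w1 t p :: real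
  assumes pos: "0 < l0" "0 < l1" "0 < w0" "0 < w1" and t: "0 \<le> t" "t \<le> 1" and p: "1 \<le> p"
  shows "((1 - t) * l0 + t * l1) powr p * ((1 - t) * w0 + t * w1) powr (1 - p)
    \<le> (1 - t) * (l0 powr p * w0 powr (1 - p)) + t * (l1 powr p * w1 powr (1 - p))"
proof -
  define W where "W = (1 - t) * w0 + t * w1"
  define l where "l = (1 - t) * l0 + t * l1"
  have W: "W > 0" and l: "l > 0"
    using pos t by (auto simp: W_def l_def add_pos_nonneg add_nonneg_pos le_less)
  define \<theta> where "\<theta> = (1 - t) * w0 / W"
  have \<theta>: "0 \<le> \<theta>" "\<theta> \<le> 1" "1 - \<theta> = t * w1 / W"
    using W t pos by (auto simp: \<theta>_def W_def field_simps)
  have "\<theta> * (l0 / w0) = (1 - t) * l0 / W" using pos by (simp add: \<theta>_def)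
  moreover have "(1 - \<theta>) * (l1 / w1) = t * l1 / W" using pos by (simp only: \<theta>(3)) simp
  ultimately have ratio: "l / W = \<theta> * (l0 / w0) + (1 - \<theta>) * (l1 / w1)"
    by (simp add: l_def add_divide_distrib)
  have "(l / W) powr p \<le> \<theta> * (l0 / w0) powr p + (1 - \<theta>) * (l1 / w1) powr p"
    unfolding ratio using convex_onD[OF powr_convex[OF p], of "1 - \<theta>" "l0 / w0" "l1 / w1"] \<theta>(1,2) pos
    by simp
  then have "W * (l / W) powr p \<le> W * (\<theta> * (l0 / w0) powr p + (1 - \<theta>) * (l1 / w1) powr p)"
    using W by (simp add: mult_left_mono)
  moreover have "W * (l / W) powr p = l powr p * W powr (1 - p)"
    using W l by (simp add: powr_divide powr_diff field_simps)
  moreover have "W * (\<theta> * (l0 / w0) powr p) = (1 - t) * (l0 powr p * w0 powr (1 - p))"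
    using W pos by (simp add: \<theta>_def powr_divide powr_diff field_simps)
  moreover have "W * ((1 - \<theta>) * (l1 / w1) powr p) = t * (l1 powr p * w1 powr (1 - p))"
    using W pos by (simp add: \<theta>(3) powr_divide powr_diff field_simps)
  ultimately show ?thesis by (simp add: W_def l_def distrib_left)
qed

lemma powr_one_minus_tangent_bound:
  fixes v w p :: real
  assumes v: "0 < v" and w: "0 < w" and p: "1 < p"
  shows "v powr (1 - p) \<le> w powr (1 - p) + (p - 1) * v powr (- p) * max 0 (w - v)"
proof (cases "w \<le> v")
  case True
  then have "v powr (1 - p) \<le> w powr (1 - p)"
    using v w p by (intro powr_mono2') auto
  moreover have "0 \<le> (p - 1) * v powr (- p) * max 0 (w - v)" using p by simp
  ultimately show ?thesis by linarith
next
  case False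
  have "DERIV (\<lambda>s. s powr (1 - p)) s :> (1 - p) * s powr (- p)" if "v \<le> s" for s
    using that v has_real_derivative_powr[of s "1 - p"] by simp
  then obtain \<xi> where \<xi>: "v < \<xi>" "\<xi> < w" "w powr (1 - p) - v powr (1 - p) = (w - v) * ((1 - p) * \<xi> powr (- p))"
    using MVT2[of v w "\<lambda>s. s powr (1 - p)" "\<lambda>s. (1 - p) * s powr (- p)"] False by force
  have "\<xi> powr (- p) \<le> v powr (- p)"
    using \<xi> v p by (intro powr_mono2') auto
  then have "(p - 1) * \<xi> powr (- p) * (w - v) \<le> (p - 1) * v powr (- p) * (w - v)"
    using p False by (intro mult_right_mono mult_left_mono) auto
  with \<xi>(3) False show ?thesis by (simp add: algebra_simps)
qed

lemma powr_perturbation_bound: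
  fixes p l v w B Z E :: real
  assumes p: "1 < p" and l: "0 < l" "l \<le> B" and v: "exp (- Z) \<le> v" and w: "0 < w"
    and E: "w - v \<le> E" "0 \<le> E"
  shows "l powr p * v powr (1 - p) \<le> l powr p * w powr (1 - p) + B powr p * (p - 1) * exp (p * Z) * E"
proof -
  have v_pos: "0 < v" using v exp_gt_zero[of "- Z"] by linarith
  have "v powr (- p) \<le> exp (- Z) powr (- p)"
    using v p by (intro powr_mono2') auto
  also have "\<dots> = exp (p * Z)" by (simp add: powr_def)
  finally have "(p - 1) * v powr (- p) * max 0 (w - v) \<le> (p - 1) * exp (p * Z) * E"
    using p E by (intro mult_mono) auto
  with powr_one_minus_tangent_bound[OF v_pos w p]
  have "l powr p * v powr (1 - p) \<le> l powr p * (w powr (1 - p) + (p - 1) * exp (p * Z) * E)"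
    using l by (intro mult_left_mono) auto
  also have "\<dots> \<le> l powr p * w powr (1 - p) + B powr p * ((p - 1) * exp (p * Z) * E)"
    using l p E by (simp add: distrib_left mult_right_mono powr_mono2)
  finally show ?thesis by (simp add: mult.assoc)
qed

lemma exp_conjugate_powr:
  fixes p u :: real
  assumes "1 < p"
  shows "exp (p / (p - 1) * u) powr (1 - p) = exp (- (p * u))"
  using assms by (simp add: powr_def field_simps)

lemma le_ln_divide_of_le_exp:
  fixes d s K S :: real
  assumes d: "0 < d" and S: "0 < S" and le: "S \<le> exp (- (d * s)) * (K * S)"
  shows "s \<le> ln K / d"
proof -
  have "1 * S \<le> (exp (- (d * s)) * K) * S" using le by (simp add: mult.assoc)
  then have one_le: "1 \<le> exp (- (d * s)) * K" using S by (simp only: mult_le_cancel_right_pos)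
  then have K: "0 < K" using zero_less_mult_pos[of "exp (- (d * s))" K] by simp
  have "0 \<le> ln (exp (- (d * s)) * K)" using one_le by simp
  also have "\<dots> = - (d * s) + ln K" using K by (simp add: ln_mult)
  finally show ?thesis using d by (simp add: pos_le_divide_eq mult.commute)
qed

section \<open>Distributions with a positive density\<close>

locale positive_density =
  fixes h :: "real \<Rightarrow> real"
  assumes measurable[measurable]: "h \<in> borel_measurable borel"
    and pos: "\<And>x. 0 < h x"
    and nn_integral: "(\<integral>\<^sup>+x. ennreal (h x) \<partial>lborel) = 1"
begin

definition law :: "real measure" where
  "law = density lborel h"

definition F :: "real \<Rightarrow> real" where
  "F = cdf law"

lemma sets_law[simp, measurable_cong]: "sets law = sets borel"
  by (simp add: law_def)

lemma space_law[simp]: "space law = UNIV"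
  by (simp add: law_def)

lemma emeasure_law: "A \<in> sets borel \<Longrightarrow> emeasure law A = (\<integral>\<^sup>+x. ennreal (h x) * indicator A x \<partial>lborel)"
  by (simp add: law_def emeasure_density)

sublocale law: real_distribution law
proof -
  have "prob_space law"
    by (rule prob_spaceI) (simp add: law_def emeasure_density nn_integral)
  then show "real_distribution law"
    by (simp add: real_distribution_def real_distribution_axioms_def)
qed

lemma measure_atMost: "measure law {..x} = F x"
  by (simp add: F_def cdf_def)

lemma measure_greaterThan: "measure law {x<..} = 1 - F x"
  using law.prob_compl[of "{..x}"] by (simp add: Compl_eq_Diff_UNIV[symmetric] measure_atMost)

lemma emeasure_atMost: "emeasure law {..x} = ennreal (F x)"
  by (simp add: law.emeasure_eq_measure measure_atMost)

lemma emeasure_greaterThan: "emeasure law {x<..} = ennreal (1 - F x)"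
  by (simp add: law.emeasure_eq_measure measure_greaterThan)

lemma F_less: assumes "a < b" shows "F a < F b"
proof -
  have "emeasure law {a<..b} \<noteq> 0"
  proof
    assume "emeasure law {a<..b} = 0"
    then have "AE x in lborel. ennreal (h x) * indicator {a<..b} x = 0"
      by (simp add: emeasure_law nn_integral_0_iff_AE)
    then have "AE x in lborel. x \<notin> {a<..b}"
    proof eventually_elim
      fix x assume "ennreal (h x) * indicator {a<..b} x = 0"
      with pos[of x] show "x \<notin> {a<..b}" by (auto simp: indicator_def ennreal_eq_0_iff)
    qed
    then have "emeasure lborel {a<..b} = 0"
      by (subst (asm) AE_iff_measurable[OF _ refl]) (auto simp: greaterThanAtMost_def greaterThan_def atMost_def Int_def)
    with assms show False by simp
  qed
  then have "0 < measure law {a<..b}"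
    by (simp add: law.emeasure_eq_measure zero_less_measure_iff)
  with law.cdf_diff_eq[OF assms] show ?thesis by (simp add: F_def)
qed

lemma F_less_iff: "F a < F b \<longleftrightarrow> a < b"
  using F_less by (metis not_less_iff_gr_or_eq order_less_asym)

lemma F_le_iff: "F a \<le> F b \<longleftrightarrow> a \<le> b"
  using F_less_iff by (meson not_less)

lemma isCont_F: "isCont F x"
proof -
  have "emeasure law {x} = 0"
    using AE_lborel_singleton[of x]
    by (simp add: emeasure_law nn_integral_0_iff_AE)
  then show ?thesis by (simp add: F_def law.isCont_cdf law.emeasure_eq_measure)
qed

lemma F_pos: "0 < F x"
  using F_less[of "x - 1" x] law.cdf_nonneg[of "x - 1"] by (simp add: F_def)

lemma F_less_1: "F x < 1"
  using F_less[of x "x + 1"] law.cdf_bounded_prob[of "x + 1"] by (simp add: F_def)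

lemma F_surj: assumes "0 < u" "u < 1" shows "\<exists>x. F x = u"
proof -
  obtain a where a: "F a < u"
    using order_tendstoD(2)[OF law.cdf_lim_at_bot assms(1)]
    by (auto simp: F_def eventually_at_bot_linorder)
  obtain b where b: "u < F b"
    using order_tendstoD(1)[OF law.cdf_lim_at_top_prob assms(2)]
    by (auto simp: F_def eventually_at_top_linorder)
  have "a \<le> b" using a b F_le_iff by (meson less_le_not_le order.trans nle_le)
  with IVT'[of F a u b] a b isCont_F show ?thesis
    by (auto intro: continuous_at_imp_continuous_on)
qed

lemma measure_greaterThanAtMost: "measure law {a<..b} = max 0 (F b - F a)"
proof (cases "a < b")
  case True
  then show ?thesis using law.cdf_diff_eq[OF True] F_less[OF True] by (simp add: F_def)
next
  case False
  then show ?thesis using F_le_iff[of b a] by simp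
qed

definition Q :: "real \<Rightarrow> real" where
  "Q = quantile law"

lemma Q_F[simp]: "Q (F x) = x"
proof -
  have "{y. F x \<le> cdf law y} = {x..}" using F_le_iff by (auto simp: F_def)
  then show ?thesis by (simp add: Q_def quantile_def)
qed

lemma F_Q[simp]: assumes "0 < u" "u < 1" shows "F (Q u) = u"
  using F_surj[OF assms] by auto

lemma isCont_Q: assumes "0 < u" "u < 1" shows "isCont Q u"
proof -
  obtain x where "F x = u" using F_surj[OF assms] by auto
  moreover have "isCont Q (F x)"
    by (rule isCont_inverse_function2[of "x - 1" x "x + 1"]) (auto intro: isCont_F)
  ultimately show ?thesis by simp
qed

end

section \<open>Monotone transport and displacement interpolation\<close>

lemma lborel_eq_distr_density_strict_mono:
  fixes K k :: "real \<Rightarrow> real"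
  assumes K: "strict_mono K" "surj K"
    and [measurable]: "k \<in> borel_measurable borel" and k_nonneg: "\<And>x. 0 \<le> k x"
    and k_interval: "\<And>a b. a \<le> b \<Longrightarrow> (\<integral>\<^sup>+x. ennreal (k x) * indicator {a<..<b} x \<partial>lborel) = ennreal (K b - K a)"
  shows "distr (density lborel k) lborel K = lborel"
proof -
  have [measurable]: "K \<in> borel_measurable borel"
    using K(1) by (intro borel_measurable_mono) (simp add: strict_mono_mono)
  have K_inv: "K (inv K y) = y" for y using K(2) by (simp add: surj_f_inv_f)
  have vimage: "K -` {l<..<u} = {inv K l<..<inv K u}" for l u
  proof -
    have "l < K x \<longleftrightarrow> inv K l < x" "K x < u \<longleftrightarrow> x < inv K u" for x
      using strict_mono_less[OF K(1)] K_inv by metis+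
    then show ?thesis by auto
  qed
  have inv_le: "inv K l \<le> inv K u" if "l \<le> u" for l u
    using that K_inv strict_mono_less_eq[OF K(1)] by metis
  show ?thesis
  proof (rule lborel_eqI[symmetric])
    fix l u :: real
    assume "\<And>b. b \<in> Basis \<Longrightarrow> l \<bullet> b \<le> u \<bullet> b"
    then have "l \<le> u" by simp
    have "emeasure (distr (density lborel k) lborel K) (box l u)
        = (\<integral>\<^sup>+x. ennreal (k x) * indicator {inv K l<..<inv K u} x \<partial>lborel)"
      by (simp add: emeasure_distr emeasure_density vimage)
    also have "\<dots> = ennreal (u - l)"
      using k_interval[OF inv_le[OF \<open>l \<le> u\<close>]] by (simp add: K_inv)
    finally show "emeasure (distr (density lborel k) lborel K) (box l u) = (\<Prod>b\<in>Basis. (u - l) \<bullet> b)"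
      by simp
  qed simp
qed

lemma nn_integral_strict_mono_subst:
  fixes K k :: "real \<Rightarrow> real"
  assumes K: "strict_mono K" "surj K"
    and [measurable]: "k \<in> borel_measurable borel" and k_nonneg: "\<And>x. 0 \<le> k x"
    and k_interval: "\<And>a b. a \<le> b \<Longrightarrow> (\<integral>\<^sup>+x. ennreal (k x) * indicator {a<..<b} x \<partial>lborel) = ennreal (K b - K a)"
    and [measurable]: "g \<in> borel_measurable borel"
  shows "(\<integral>\<^sup>+y. g y \<partial>lborel) = (\<integral>\<^sup>+x. ennreal (k x) * g (K x) \<partial>lborel)"
proof -
  have [measurable]: "K \<in> borel_measurable borel"
    using K(1) by (intro borel_measurable_mono) (simp add: strict_mono_mono)
  have "(\<integral>\<^sup>+y. g y \<partial>lborel) = (\<integral>\<^sup>+y. g y \<partial>distr (density lborel k) lborel K)"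
    by (simp add: lborel_eq_distr_density_strict_mono[OF K _ k_nonneg k_interval])
  also have "\<dots> = (\<integral>\<^sup>+x. ennreal (k x) * g (K x) \<partial>lborel)"
    by (simp add: nn_integral_distr nn_integral_density)
  finally show ?thesis .
qed

locale monotone_transport = m: positive_density m + f: positive_density f
  for m f :: "real \<Rightarrow> real"
begin

definition T :: "real \<Rightarrow> real" where
  "T = ot_map m.law f.law"

definition Tinv :: "real \<Rightarrow> real" where
  "Tinv y = m.Q (f.F y)"

lemma T_eq: "T x = f.Q (m.F x)"
  by (simp add: T_def ot_map_def f.Q_def m.F_def)

lemma F_T[simp]: "f.F (T x) = m.F x"
  using m.F_pos[of x] m.F_less_1[of x] by (simp add: T_eq)

lemma T_Tinv[simp]: "T (Tinv y) = y"
  using f.F_pos[of y] f.F_less_1[of y] by (simp add: T_eq Tinv_def)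

lemma F_Tinv[simp]: "m.F (Tinv y) = f.F y"
  by (metis F_T T_Tinv)

lemma T_less_iff: "T a < T b \<longleftrightarrow> a < b"
  by (metis F_T f.F_less_iff m.F_less_iff)

lemma T_le_iff: "T a \<le> T b \<longleftrightarrow> a \<le> b"
  by (meson T_less_iff not_less)

lemma T_le_iff_le_Tinv: "T x \<le> y \<longleftrightarrow> x \<le> Tinv y"
  by (metis T_Tinv T_le_iff)

lemma less_T_iff_Tinv_less: "y < T x \<longleftrightarrow> Tinv y < x"
  by (metis T_Tinv T_less_iff)

lemma T_measurable[measurable]: "T \<in> borel_measurable borel"
  by (rule borel_measurable_mono) (simp add: mono_def T_le_iff)

lemma isCont_T: "isCont T x"
proof -
  have "isCont f.Q (m.F x)"
    using m.F_pos[of x] m.F_less_1[of x] by (intro f.isCont_Q)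
  with m.isCont_F have "isCont (\<lambda>x. f.Q (m.F x)) x"
    by (rule isCont_o2)
  then show ?thesis by (simp add: T_eq[abs_def])
qed

lemma distr_T: "distr m.law lborel T = f.law"
proof -
  have "distr m.law lborel T = distr m.law borel T"
    by (rule distr_cong) auto
  also have "\<dots> = f.law"
  proof (rule cdf_unique)
    show "real_distribution (distr m.law borel T)"
      by (rule m.law.real_distribution_distr) simp
    have "cdf (distr m.law borel T) y = cdf f.law y" for y
    proof -
      have "T -` {..y} = {..Tinv y}" by (auto simp: T_le_iff_le_Tinv)
      then have "cdf (distr m.law borel T) y = m.F (Tinv y)"
        by (simp add: cdf_def measure_distr m.F_def)
      then show ?thesis by (simp add: f.F_def)
    qed
    then show "cdf (distr m.law borel T) = cdf f.law" ..
  qed (rule f.law.real_distribution_axioms)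
  finally show ?thesis .
qed

(* The derivative of T, which need not exist classically: only its interval integrals
   T b - T a are used. *)
definition jac :: "real \<Rightarrow> real" where
  "jac x = m x / f (T x)"

lemma jac_pos: "0 < jac x"
  by (simp add: jac_def m.pos f.pos)

lemma jac_measurable[measurable]: "jac \<in> borel_measurable borel"
  unfolding jac_def by measurable

lemma nn_integral_jac_interval:
  assumes "a \<le> b"
  shows "(\<integral>\<^sup>+x. ennreal (jac x) * indicator {a<..<b} x \<partial>lborel) = ennreal (T b - T a)"
proof -
  have "(\<integral>\<^sup>+x. ennreal (jac x) * indicator {a<..<b} x \<partial>lborel)
      = (\<integral>\<^sup>+x. ennreal (m x) * (ennreal (1 / f (T x)) * indicator {T a<..<T b} (T x)) \<partial>lborel)"
    by (intro nn_integral_cong)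
       (auto simp: jac_def indicator_def T_less_iff ennreal_mult'[symmetric] m.pos f.pos less_imp_le)
  also have "\<dots> = (\<integral>\<^sup>+y. ennreal (1 / f y) * indicator {T a<..<T b} y \<partial>distr m.law lborel T)"
    by (simp add: m.law_def nn_integral_density nn_integral_distr)
  also have "\<dots> = (\<integral>\<^sup>+y. ennreal (f y) * (ennreal (1 / f y) * indicator {T a<..<T b} y) \<partial>lborel)"
    by (simp add: distr_T f.law_def nn_integral_density)
  also have "\<dots> = (\<integral>\<^sup>+y. indicator {T a<..<T b} y \<partial>lborel)"
    by (intro nn_integral_cong)
       (auto simp: indicator_def ennreal_mult'[symmetric] f.pos less_imp_le f.pos[THEN less_imp_neq, symmetric])
  also have "\<dots> = ennreal (T b - T a)"
    using assms by (simp add: T_le_iff)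
  finally show ?thesis .
qed

definition geo :: "real \<Rightarrow> real \<Rightarrow> real" where
  "geo t x = (1 - t) * x + t * T x"

definition geo_jac :: "real \<Rightarrow> real \<Rightarrow> real" where
  "geo_jac t x = (1 - t) + t * jac x"

lemma geo_0: "geo 0 = (\<lambda>x. x)" and geo_1: "geo 1 = T"
  by (simp_all add: geo_def[abs_def])

lemma geo_measurable[measurable]: "geo t \<in> borel_measurable borel"
  unfolding geo_def[abs_def] by measurable

lemma geo_jac_measurable[measurable]: "geo_jac t \<in> borel_measurable borel"
  unfolding geo_jac_def by measurable

lemma geo_jac_pos: assumes "t \<in> {0..1}" shows "0 < geo_jac t x"
  using assms jac_pos[of x] by (cases "t = 1") (auto simp: geo_jac_def intro: add_pos_nonneg)

lemma strict_mono_geo: assumes "t \<in> {0..1}" shows "strict_mono (geo t)"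
proof
  fix a b :: real assume "a < b"
  then have "(1 - t) * a \<le> (1 - t) * b" "t * T a \<le> t * T b"
    using assms by (auto intro!: mult_left_mono simp: T_le_iff)
  moreover have "(1 - t) * a < (1 - t) * b \<or> t * T a < t * T b"
    using assms \<open>a < b\<close> by (cases "t = 1") (auto simp: T_less_iff)
  ultimately show "geo t a < geo t b" by (auto simp: geo_def)
qed

lemma isCont_geo: "isCont (geo t) x"
  unfolding geo_def[abs_def] by (intro continuous_intros isCont_T)

lemma surj_geo: assumes t: "t \<in> {0..1}" shows "surj (geo t)"
proof -
  have "\<exists>x. geo t x = y" for y
  proof -
    define a b where "a = min y (Tinv y)" and "b = max y (Tinv y)"
    have "geo t a \<le> (1 - t) * y + t * y"
      unfolding geo_def using t by (intro add_mono mult_left_mono) (auto simp: a_def T_le_iff_le_Tinv)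
    moreover have "(1 - t) * y + t * y \<le> geo t b"
      unfolding geo_def using t T_le_iff[of "Tinv y" b]
      by (intro add_mono mult_left_mono) (auto simp: b_def)
    moreover have "a \<le> b" by (simp add: a_def b_def)
    ultimately show ?thesis
      using IVT'[of "geo t" a y b] isCont_geo by (auto simp: algebra_simps continuous_at_imp_continuous_on)
  qed
  then show ?thesis by (metis surjI)
qed

lemma nn_integral_geo_jac_interval:
  assumes t: "t \<in> {0..1}" and "a \<le> b"
  shows "(\<integral>\<^sup>+x. ennreal (geo_jac t x) * indicator {a<..<b} x \<partial>lborel) = ennreal (geo t b - geo t a)"
proof -
  have "(\<integral>\<^sup>+x. ennreal (geo_jac t x) * indicator {a<..<b} x \<partial>lborel)
      = (\<integral>\<^sup>+x. ennreal (1 - t) * indicator {a<..<b} x + ennreal t * (ennreal (jac x) * indicator {a<..<b} x) \<partial>lborel)"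
    using t jac_pos
    by (intro nn_integral_cong)
       (auto simp: geo_jac_def indicator_def ennreal_mult'[symmetric] ennreal_plus[symmetric] less_imp_le simp del: ennreal_plus)
  also have "\<dots> = ennreal (1 - t) * ennreal (b - a) + ennreal t * ennreal (T b - T a)"
    using assms by (subst nn_integral_add) (auto simp: nn_integral_cmult nn_integral_jac_interval)
  also have "\<dots> = ennreal ((1 - t) * (b - a) + t * (T b - T a))"
    using assms T_le_iff[of a b] by (simp add: ennreal_mult'[symmetric] ennreal_plus[symmetric] del: ennreal_plus)
  also have "\<dots> = ennreal (geo t b - geo t a)"
    by (simp add: geo_def algebra_simps)
  finally show ?thesis .
qed

lemma nn_integral_geo_subst:
  assumes t: "t \<in> {0..1}" and [measurable]: "g \<in> borel_measurable borel"
  shows "(\<integral>\<^sup>+y. g y \<partial>lborel) = (\<integral>\<^sup>+x. ennreal (geo_jac t x) * g (geo t x) \<partial>lborel)"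
  by (rule nn_integral_strict_mono_subst[OF strict_mono_geo[OF t] surj_geo[OF t] geo_jac_measurable
        less_imp_le[OF geo_jac_pos[OF t]] nn_integral_geo_jac_interval[OF t]]) measurable

definition geo_density :: "real \<Rightarrow> real \<Rightarrow> real" where
  "geo_density t y = m (inv (geo t) y) / geo_jac t (inv (geo t) y)"

lemma geo_density_geo: assumes "t \<in> {0..1}" shows "geo_density t (geo t x) = m x / geo_jac t x"
  using strict_mono_imp_inj_on[OF strict_mono_geo[OF assms]] by (simp add: geo_density_def inv_f_f)

lemma geo_density_pos: assumes "t \<in> {0..1}" shows "0 < geo_density t y"
  using geo_jac_pos[OF assms] m.pos by (simp add: geo_density_def)

lemma geo_density_measurable[measurable]:
  assumes "t \<in> {0..1}" shows "geo_density t \<in> borel_measurable borel"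
proof -
  have inj: "inj (geo t)"
    using strict_mono_imp_inj_on[OF strict_mono_geo[OF assms]] .
  have "strict_mono (inv (geo t))"
    using strict_mono_geo[OF assms] surj_geo[OF assms]
    by (rule strict_mono_inv) (simp add: inv_f_f[OF inj])
  then have [measurable]: "inv (geo t) \<in> borel_measurable borel"
    by (intro borel_measurable_mono strict_mono_mono)
  show ?thesis unfolding geo_density_def[abs_def] by measurable
qed

lemma distr_geo:
  assumes t: "t \<in> {0..1}"
  shows "distr m.law lborel (geo t) = density lborel (geo_density t)"
proof (rule measure_eqI)
  fix A assume "A \<in> sets (distr m.law lborel (geo t))"
  then have [measurable]: "A \<in> sets borel" by simp
  have [measurable]: "geo_density t \<in> borel_measurable borel" using t by measurable
  have "emeasure (distr m.law lborel (geo t)) A = emeasure m.law (geo t -` A)"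
    by (subst emeasure_distr) auto
  also have "\<dots> = (\<integral>\<^sup>+x. ennreal (m x) * indicator A (geo t x) \<partial>lborel)"
    using measurable_sets_borel[OF geo_measurable \<open>A \<in> sets borel\<close>]
    by (subst m.emeasure_law) (auto intro!: nn_integral_cong simp: indicator_def)
  also have "\<dots> = (\<integral>\<^sup>+x. ennreal (geo_jac t x) * (ennreal (geo_density t (geo t x)) * indicator A (geo t x)) \<partial>lborel)"
    using geo_jac_pos[OF t] m.pos
    by (intro nn_integral_cong)
       (simp add: geo_density_geo[OF t] ennreal_mult'[symmetric] less_imp_le mult.assoc[symmetric]
         geo_jac_pos[OF t, THEN less_imp_neq, symmetric])
  also have "\<dots> = (\<integral>\<^sup>+y. ennreal (geo_density t y) * indicator A y \<partial>lborel)"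
    by (rule nn_integral_geo_subst[OF t, symmetric]) measurable
  also have "\<dots> = emeasure (density lborel (geo_density t)) A"
    by (simp add: emeasure_density)
  finally show "emeasure (distr m.law lborel (geo t)) A = emeasure (density lborel (geo_density t)) A" .
qed simp

lemma distr_geo_0: "distr m.law lborel (geo 0) = m.law"
  by (simp add: geo_0 distr_id2)

lemma distr_geo_1: "distr m.law lborel (geo 1) = f.law"
  by (simp add: geo_1 distr_T)

lemma Frho_distr_geo:
  assumes t: "t \<in> {0..1}" and [measurable]: "\<rho> \<in> borel_measurable borel"
  shows "Frho r \<rho> (distr m.law lborel (geo t))
       = (\<integral>\<^sup>+x. ennreal (geo_jac t x * (\<rho> (geo t x) / (m x / geo_jac t x) powr r)) \<partial>lborel)"
proof -
  have [measurable]: "geo_density t \<in> borel_measurable borel" using t by measurable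
  define \<mu> where "\<mu> = distr m.law lborel (geo t)"
  have dens: "is_density \<mu> (geo_density t)"
    using geo_density_pos[OF t] by (auto simp: is_density_def \<mu>_def distr_geo[OF t] less_imp_le)
  define g where "g = (SOME g. is_density \<mu> g)"
  have g: "is_density \<mu> g" unfolding g_def by (rule someI[of "is_density \<mu>", OF dens])
  then have [measurable]: "g \<in> borel_measurable borel" by (simp add: is_density_def)
  have "density lborel g = density lborel (geo_density t)"
    using g dens by (simp add: is_density_def)
  then have "AE x in lborel. ennreal (g x) = ennreal (geo_density t x)"
    by (intro sigma_finite_measure.density_unique[OF sigma_finite_lborel]) auto
  then have ae: "AE x in lborel. g x = geo_density t x"
    by (rule eventually_mono) (use g geo_density_pos[OF t] in \<open>auto simp: is_density_def less_imp_le\<close>)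
  have "Frho r \<rho> \<mu> = (\<integral>\<^sup>+x. (if 0 < g x then ennreal (\<rho> x / g x powr r) else \<infinity>) \<partial>lborel)"
    using dens unfolding Frho_def g_def by (auto simp: Let_def)
  also have "\<dots> = (\<integral>\<^sup>+y. ennreal (\<rho> y / geo_density t y powr r) \<partial>lborel)"
    using ae geo_density_pos[OF t] by (intro nn_integral_cong_AE) (auto elim!: eventually_mono)
  also have "\<dots> = (\<integral>\<^sup>+x. ennreal (geo_jac t x) * ennreal (\<rho> (geo t x) / geo_density t (geo t x) powr r) \<partial>lborel)"
    by (rule nn_integral_geo_subst[OF t]) measurable
  also have "\<dots> = (\<integral>\<^sup>+x. ennreal (geo_jac t x * (\<rho> (geo t x) / (m x / geo_jac t x) powr r)) \<partial>lborel)"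
    using geo_jac_pos[OF t]
    by (intro nn_integral_cong) (simp add: geo_density_geo[OF t] ennreal_mult'[symmetric] less_imp_le)
  finally show ?thesis by (simp add: \<mu>_def)
qed

end

section \<open>Optimality of the monotone coupling\<close>

lemma nn_integral_ramp:
  fixes x y :: real
  shows "(\<integral>\<^sup>+s. ennreal (y - s) * indicator {x..} s \<partial>lborel) = ennreal ((max 0 (y - x))\<^sup>2 / 2)"
proof (cases "x < y")
  case False
  then have "(\<integral>\<^sup>+s. ennreal (y - s) * indicator {x..} s \<partial>lborel) = (\<integral>\<^sup>+s. 0 \<partial>(lborel :: real measure))"
    by (intro nn_integral_cong) (auto simp: indicator_def ennreal_eq_0_iff)
  with False show ?thesis by simp
next
  case True
  have "((\<lambda>s. y - s) has_integral ((\<lambda>s. - (y - s)\<^sup>2 / 2) y - (\<lambda>s. - (y - s)\<^sup>2 / 2) x)) {x..y}"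
    using True
    by (intro fundamental_theorem_of_calculus)
       (auto intro!: derivative_eq_intros simp: has_real_derivative_iff_has_vector_derivative[symmetric]
         power2_eq_square field_simps)
  then have I: "((\<lambda>s. y - s) has_integral (y - x)\<^sup>2 / 2) {x..y}"
    by simp
  have "(\<integral>\<^sup>+s. ennreal (y - s) * indicator {x..y} s \<partial>lborel) = ennreal ((y - x)\<^sup>2 / 2)"
    by (rule nn_integral_has_integral_lebesgue'[OF _ I]) simp
  moreover have "(\<integral>\<^sup>+s. ennreal (y - s) * indicator {x..} s \<partial>lborel)
      = (\<integral>\<^sup>+s. ennreal (y - s) * indicator {x..y} s \<partial>lborel)"
    by (intro nn_integral_cong) (auto simp: indicator_def ennreal_eq_0_iff)
  ultimately show ?thesis using True by simp
qed

(* The pairs s < u for which the interval (s, u) lies between x and y. This set has area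
   (x - y)^2 / 2, so the cost of a coupling is an integral of quadrant probabilities. *)
definition crossing :: "real \<times> real \<Rightarrow> real \<times> real \<Rightarrow> ennreal" where
  "crossing p q = indicator {p. fst p \<le> fst q \<and> fst q < snd q \<and> snd q < snd p} p
    + indicator {p. snd p \<le> fst q \<and> fst q < snd q \<and> snd q < fst p} p"

lemma crossing_measurable[measurable]:
  "(\<lambda>(p, q). crossing p q) \<in> borel_measurable ((borel \<Otimes>\<^sub>M borel) \<Otimes>\<^sub>M (lborel \<Otimes>\<^sub>M lborel))"
  unfolding crossing_def by measurable

lemma square_eq_nn_integral_crossing:
  "ennreal ((x - y)\<^sup>2) = 2 * (\<integral>\<^sup>+q. crossing (x, y) q \<partial>(lborel \<Otimes>\<^sub>M lborel))"
proof -
  have Ioo: "emeasure lborel {l<..<u} = ennreal (u - l)" for l u :: real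
    by (cases "l \<le> u") (auto simp: ennreal_neg)
  have inner: "(\<integral>\<^sup>+u. crossing (x, y) (s, u) \<partial>lborel)
      = ennreal (y - s) * indicator {x..} s + ennreal (x - s) * indicator {y..} s" for s
  proof -
    have "(\<integral>\<^sup>+u. crossing (x, y) (s, u) \<partial>lborel)
        = (\<integral>\<^sup>+u. indicator {x..} s * indicator {s<..<y} u + indicator {y..} s * indicator {s<..<x} u \<partial>lborel)"
      by (intro nn_integral_cong) (auto simp: crossing_def indicator_def)
    also have "\<dots> = ennreal (y - s) * indicator {x..} s + ennreal (x - s) * indicator {y..} s"
      by (subst nn_integral_add) (auto simp: nn_integral_cmult Ioo mult.commute)
    finally show ?thesis .
  qed
  have "(\<integral>\<^sup>+q. crossing (x, y) q \<partial>(lborel \<Otimes>\<^sub>M lborel)) = (\<integral>\<^sup>+s. \<integral>\<^sup>+u. crossing (x, y) (s, u) \<partial>lborel \<partial>lborel)"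
    by (rule lborel.nn_integral_fst[symmetric]) (unfold crossing_def, measurable)
  also have "\<dots> = (\<integral>\<^sup>+s. ennreal (y - s) * indicator {x..} s + ennreal (x - s) * indicator {y..} s \<partial>lborel)"
    by (simp add: inner)
  also have "\<dots> = ennreal ((max 0 (y - x))\<^sup>2 / 2 + (max 0 (x - y))\<^sup>2 / 2)"
    by (simp add: nn_integral_add nn_integral_ramp ennreal_plus[symmetric] del: ennreal_plus)
  finally have "2 * (\<integral>\<^sup>+q. crossing (x, y) q \<partial>(lborel \<Otimes>\<^sub>M lborel))
      = ennreal 2 * ennreal ((max 0 (y - x))\<^sup>2 / 2 + (max 0 (x - y))\<^sup>2 / 2)" by simp
  also have "\<dots> = ennreal ((x - y)\<^sup>2)"
    by (subst ennreal_mult'[symmetric]) (auto simp: max_def power2_eq_square algebra_simps)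
  finally show ?thesis by simp
qed

lemma nn_integral_square_eq_crossing:
  assumes P: "prob_space P" and sets_P: "sets P = sets (borel \<Otimes>\<^sub>M borel)"
  shows "(\<integral>\<^sup>+p. ennreal ((fst p - snd p)\<^sup>2) \<partial>P)
       = 2 * (\<integral>\<^sup>+q. (\<integral>\<^sup>+p. crossing p q \<partial>P) \<partial>(lborel \<Otimes>\<^sub>M lborel))"
proof -
  interpret P: prob_space P by (rule P)
  have sf: "sigma_finite_measure (lborel \<Otimes>\<^sub>M lborel :: (real \<times> real) measure)"
    by (simp add: lborel_prod sigma_finite_lborel)
  interpret PQ: pair_sigma_finite P "lborel \<Otimes>\<^sub>M lborel :: (real \<times> real) measure"
    by (simp add: pair_sigma_finite_def P.sigma_finite_measure_axioms lborel_prod sigma_finite_lborel)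
  have meas: "(\<lambda>(p, q). crossing p q) \<in> borel_measurable (P \<Otimes>\<^sub>M (lborel \<Otimes>\<^sub>M lborel))"
    by (subst measurable_cong_sets[OF sets_pair_measure_cong[OF sets_P refl] refl]) (rule crossing_measurable)
  have "(\<integral>\<^sup>+p. ennreal ((fst p - snd p)\<^sup>2) \<partial>P) = (\<integral>\<^sup>+p. 2 * (\<integral>\<^sup>+q. crossing p q \<partial>(lborel \<Otimes>\<^sub>M lborel)) \<partial>P)"
    using square_eq_nn_integral_crossing by (intro nn_integral_cong) (metis prod.collapse)
  also have "\<dots> = 2 * (\<integral>\<^sup>+p. (\<integral>\<^sup>+q. crossing p q \<partial>(lborel \<Otimes>\<^sub>M lborel)) \<partial>P)"
    using sigma_finite_measure.borel_measurable_nn_integral[OF sf meas] by (intro nn_integral_cmult) simp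
  also have "(\<integral>\<^sup>+p. (\<integral>\<^sup>+q. crossing p q \<partial>(lborel \<Otimes>\<^sub>M lborel)) \<partial>P)
      = (\<integral>\<^sup>+q. (\<integral>\<^sup>+p. crossing p q \<partial>P) \<partial>(lborel \<Otimes>\<^sub>M lborel))"
    by (rule PQ.Fubini'[OF meas, symmetric])
  finally show ?thesis .
qed

lemma quadrant_sets[measurable]:
  "{p::real \<times> real. fst p \<le> s \<and> u < snd p} \<in> sets (borel \<Otimes>\<^sub>M borel)"
  "{p::real \<times> real. snd p \<le> s \<and> u < fst p} \<in> sets (borel \<Otimes>\<^sub>M borel)"
proof -
  have "{p::real \<times> real. fst p \<le> s \<and> u < snd p} = {..s} \<times> {u<..}"
    "{p::real \<times> real. snd p \<le> s \<and> u < fst p} = {u<..} \<times> {..s}" by auto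
  then show "{p::real \<times> real. fst p \<le> s \<and> u < snd p} \<in> sets (borel \<Otimes>\<^sub>M borel)"
    "{p::real \<times> real. snd p \<le> s \<and> u < fst p} \<in> sets (borel \<Otimes>\<^sub>M borel)"
    by simp_all
qed

lemma nn_integral_crossing:
  assumes [measurable_cong]: "sets M = sets (borel \<Otimes>\<^sub>M borel)" and "s < u"
  shows "(\<integral>\<^sup>+p. crossing p (s, u) \<partial>M)
    = emeasure M {p. fst p \<le> s \<and> u < snd p} + emeasure M {p. snd p \<le> s \<and> u < fst p}"
proof -
  have "(\<integral>\<^sup>+p. crossing p (s, u) \<partial>M)
      = (\<integral>\<^sup>+p. indicator {p. fst p \<le> s \<and> u < snd p} p + indicator {p. snd p \<le> s \<and> u < fst p} p \<partial>M)"
    using \<open>s < u\<close> by (intro nn_integral_cong) (simp add: crossing_def indicator_def)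
  also have "\<dots> = emeasure M {p. fst p \<le> s \<and> u < snd p} + emeasure M {p. snd p \<le> s \<and> u < fst p}"
    by (subst nn_integral_add) (auto simp: assms)
  finally show ?thesis .
qed

lemma coupling_quadrant_lower_bound:
  assumes "\<pi> \<in> couplings \<mu> \<nu>"
  shows "cdf \<mu> s - cdf \<nu> u \<le> measure \<pi> {p. fst p \<le> s \<and> u < snd p}"
    and "cdf \<nu> s - cdf \<mu> u \<le> measure \<pi> {p. snd p \<le> s \<and> u < fst p}"
proof -
  from assms have "prob_space \<pi>" and sets_\<pi>: "sets \<pi> = sets (borel :: (real \<times> real) measure)"
    and fst_\<pi>: "distr \<pi> borel fst = \<mu>" and snd_\<pi>: "distr \<pi> borel snd = \<nu>"
    by (simp_all add: couplings_def)
  then have [measurable_cong]: "sets \<pi> = sets (borel \<Otimes>\<^sub>M borel)"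
    by (simp only: borel_prod)
  interpret prob_space \<pi> by fact
  have space_\<pi>: "space \<pi> = UNIV" using sets_eq_imp_space_eq[OF sets_\<pi>] by simp
  have "{p::real \<times> real. fst p \<le> a} = {..a} \<times> UNIV" "{p::real \<times> real. snd p \<le> a} = UNIV \<times> {..a}" for a
    by auto
  then have sets: "{p. fst p \<le> a} \<in> sets \<pi>" "{p. snd p \<le> a} \<in> sets \<pi>" for a
    by (simp_all add: sets_\<pi> borel_prod[symmetric])
  have "fst -` {..a} \<inter> space \<pi> = {p. fst p \<le> a}" "snd -` {..a} \<inter> space \<pi> = {p. snd p \<le> a}" for a
    by (auto simp: space_\<pi>)
  then have cdf_\<mu>: "cdf \<mu> a = measure \<pi> {p. fst p \<le> a}" and cdf_\<nu>: "cdf \<nu> a = measure \<pi> {p. snd p \<le> a}" for a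
    unfolding cdf_def fst_\<pi>[symmetric] snd_\<pi>[symmetric] by (subst measure_distr; simp)+
  have diff: "measure \<pi> A - measure \<pi> B \<le> measure \<pi> (A - B)" if "A \<in> sets \<pi>" "B \<in> sets \<pi>" for A B
    using finite_measure_Diff'[OF that] finite_measure_mono[OF Int_lower2[of A B] that(2)] by linarith
  have "{p. fst p \<le> s \<and> u < snd p} = {p. fst p \<le> s} - {p. snd p \<le> u}"
    "{p. snd p \<le> s \<and> u < fst p} = {p. snd p \<le> s} - {p. fst p \<le> u}" by auto
  with diff[OF sets(1,2)] diff[OF sets(2,1)]
  show "cdf \<mu> s - cdf \<nu> u \<le> measure \<pi> {p. fst p \<le> s \<and> u < snd p}"
    "cdf \<nu> s - cdf \<mu> u \<le> measure \<pi> {p. snd p \<le> s \<and> u < fst p}"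
    by (simp_all only: cdf_\<mu> cdf_\<nu>)
qed

context monotone_transport
begin

definition monotone_coupling :: "(real \<times> real) measure" where
  "monotone_coupling = distr m.law (borel \<Otimes>\<^sub>M borel) (\<lambda>x. (x, T x))"

lemma sets_monotone_coupling: "sets monotone_coupling = sets (borel \<Otimes>\<^sub>M borel)"
  by (simp add: monotone_coupling_def)

lemma prob_space_monotone_coupling: "prob_space monotone_coupling"
  unfolding monotone_coupling_def by (rule m.law.prob_space_distr) measurable

lemma nn_integral_monotone_coupling:
  "(\<integral>\<^sup>+p. ennreal ((fst p - snd p)\<^sup>2) \<partial>monotone_coupling) = (\<integral>\<^sup>+x. ennreal ((x - T x)\<^sup>2) \<partial>m.law)"
  unfolding monotone_coupling_def by (subst nn_integral_distr) auto

lemma measure_monotone_coupling_quadrant: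
  "measure monotone_coupling {p. fst p \<le> s \<and> u < snd p} = max 0 (m.F s - f.F u)"
  "measure monotone_coupling {p. snd p \<le> s \<and> u < fst p} = max 0 (f.F s - m.F u)"
proof -
  have "(\<lambda>x. (x, T x)) -` {p. fst p \<le> s \<and> u < snd p} = {Tinv u<..s}"
    "(\<lambda>x. (x, T x)) -` {p. snd p \<le> s \<and> u < fst p} = {u<..Tinv s}"
    by (auto simp: less_T_iff_Tinv_less T_le_iff_le_Tinv)
  then show "measure monotone_coupling {p. fst p \<le> s \<and> u < snd p} = max 0 (m.F s - f.F u)"
    "measure monotone_coupling {p. snd p \<le> s \<and> u < fst p} = max 0 (f.F s - m.F u)"
    unfolding monotone_coupling_def by (subst measure_distr; simp add: m.measure_greaterThanAtMost)+
qed

lemma nn_integral_crossing_monotone_coupling_le: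
  assumes \<pi>: "\<pi> \<in> couplings m.law f.law"
  shows "(\<integral>\<^sup>+p. crossing p q \<partial>monotone_coupling) \<le> (\<integral>\<^sup>+p. crossing p q \<partial>\<pi>)"
proof -
  obtain s u where q: "q = (s, u)" by (cases q)
  have "prob_space \<pi>" and "sets \<pi> = sets (borel :: (real \<times> real) measure)"
    using \<pi> by (simp_all add: couplings_def)
  then have sets_\<pi>: "sets \<pi> = sets (borel \<Otimes>\<^sub>M borel)"
    by (simp only: borel_prod)
  interpret \<pi>: prob_space \<pi> by fact
  interpret mc: prob_space monotone_coupling by (rule prob_space_monotone_coupling)
  show ?thesis
  proof (cases "s < u")
    case True
    have "max 0 (m.F s - f.F u) \<le> measure \<pi> {p. fst p \<le> s \<and> u < snd p}"
      "max 0 (f.F s - m.F u) \<le> measure \<pi> {p. snd p \<le> s \<and> u < fst p}"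
      using coupling_quadrant_lower_bound[OF \<pi>, of s u] by (auto simp: m.F_def f.F_def)
    then have "ennreal (max 0 (m.F s - f.F u)) + ennreal (max 0 (f.F s - m.F u))
        \<le> ennreal (measure \<pi> {p. fst p \<le> s \<and> u < snd p}) + ennreal (measure \<pi> {p. snd p \<le> s \<and> u < fst p})"
      by (intro add_mono ennreal_leI)
    then show ?thesis
      by (simp only: q nn_integral_crossing[OF sets_monotone_coupling True] nn_integral_crossing[OF sets_\<pi> True]
          mc.emeasure_eq_measure \<pi>.emeasure_eq_measure measure_monotone_coupling_quadrant)
  qed (simp add: q crossing_def indicator_def)
qed

lemma nn_integral_T_le_W2sq: "(\<integral>\<^sup>+x. ennreal ((x - T x)\<^sup>2) \<partial>m.law) \<le> W2sq m.law f.law"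
  unfolding W2sq_def
proof (rule INF_greatest)
  fix \<pi> assume \<pi>: "\<pi> \<in> couplings m.law f.law"
  then have "prob_space \<pi>" and "sets \<pi> = sets (borel :: (real \<times> real) measure)"
    by (simp_all add: couplings_def)
  then have sets_\<pi>: "sets \<pi> = sets (borel \<Otimes>\<^sub>M borel)"
    by (simp only: borel_prod)
  have "(\<integral>\<^sup>+x. ennreal ((x - T x)\<^sup>2) \<partial>m.law)
      = 2 * (\<integral>\<^sup>+q. (\<integral>\<^sup>+p. crossing p q \<partial>monotone_coupling) \<partial>(lborel \<Otimes>\<^sub>M lborel))"
    by (simp add: nn_integral_monotone_coupling[symmetric]
        nn_integral_square_eq_crossing[OF prob_space_monotone_coupling sets_monotone_coupling])
  also have "\<dots> \<le> 2 * (\<integral>\<^sup>+q. (\<integral>\<^sup>+p. crossing p q \<partial>\<pi>) \<partial>(lborel \<Otimes>\<^sub>M lborel))"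
    by (intro mult_left_mono nn_integral_mono nn_integral_crossing_monotone_coupling_le[OF \<pi>]) simp
  also have "\<dots> = (\<integral>\<^sup>+p. ennreal ((fst p - snd p)\<^sup>2) \<partial>\<pi>)"
    by (simp add: nn_integral_square_eq_crossing[OF \<open>prob_space \<pi>\<close> sets_\<pi>])
  finally show "(\<integral>\<^sup>+x. ennreal ((x - T x)\<^sup>2) \<partial>m.law) \<le> (\<integral>\<^sup>+p. ennreal ((fst p - snd p)\<^sup>2) \<partial>\<pi>)" .
qed

end

section \<open>The log-concave reference density\<close>

locale potential =
  fixes V :: "real \<Rightarrow> real" and L :: real
  assumes convex: "convex_on UNIV V"
    and lipschitz: "L-lipschitz_on UNIV V"
    and differentiable: "\<forall>x. V differentiable (at x)"
    and deriv_lipschitz: "L-lipschitz_on UNIV (deriv V)"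
    and exp_minus_has_integral: "((\<lambda>x. exp (- V x)) has_integral 1) UNIV"
begin

lemma L_nonneg: "0 \<le> L"
  using lipschitz lipschitz_on_nonneg by blast

lemma has_deriv_V: "(V has_real_derivative deriv V x) (at x)"
  using differentiable DERIV_deriv_iff_real_differentiable by blast

lemma continuous_on_V: "continuous_on A V"
  using has_deriv_V DERIV_isCont continuous_at_imp_continuous_on by blast

lemma V_measurable[measurable]: "V \<in> borel_measurable borel"
  by (intro borel_measurable_continuous_onI continuous_on_V)

lemma abs_V_diff_le: "\<bar>V x - V y\<bar> \<le> L * \<bar>x - y\<bar>"
  using lipschitz_onD[OF lipschitz, of x y] by (simp add: dist_real_def)

lemma abs_deriv_V_diff_le: "\<bar>deriv V x - deriv V y\<bar> \<le> L * \<bar>x - y\<bar>"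
  using lipschitz_onD[OF deriv_lipschitz, of x y] by (simp add: dist_real_def)

lemma V_above_tangent: "deriv V x * (y - x) \<le> V y - V x"
  by (rule convex_on_imp_above_tangent[OF convex]) (auto intro: has_field_derivative_at_within has_deriv_V)

lemma deriv_V_mono: assumes "x \<le> y" shows "deriv V x \<le> deriv V y"
proof -
  have "(deriv V y - deriv V x) * (y - x) \<ge> 0"
    using V_above_tangent[of x y] V_above_tangent[of y x] by (simp add: algebra_simps)
  with assms show ?thesis
    by (cases "x = y") (auto simp: zero_le_mult_iff)
qed

lemma V_semiconcave:
  assumes "0 \<le> t" "t \<le> 1"
  shows "(1 - t) * V x + t * V (x + d) - L * d\<^sup>2 / 2 * t * (1 - t) \<le> V (x + t * d)"
proof -
  have deriv: "((\<lambda>s. V (x + s * d)) has_real_derivative deriv V (x + s * d) * d) (at s)" for s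
  proof -
    have "((\<lambda>s. x + s * d) has_real_derivative d) (at s)" by (auto intro!: derivative_eq_intros)
    from DERIV_chain2[OF has_deriv_V this] show ?thesis .
  qed
  have "deriv V (x + s2 * d) * d - deriv V (x + s1 * d) * d \<le> L * d\<^sup>2 * (s2 - s1)" if "s1 \<le> s2" for s1 s2
  proof -
    have "(deriv V (x + s2 * d) - deriv V (x + s1 * d)) * d \<le> \<bar>deriv V (x + s2 * d) - deriv V (x + s1 * d)\<bar> * \<bar>d\<bar>"
      by (metis abs_ge_self abs_mult)
    also have "\<dots> \<le> L * \<bar>(s2 - s1) * d\<bar> * \<bar>d\<bar>"
      using abs_deriv_V_diff_le[of "x + s2 * d" "x + s1 * d"]
      by (intro mult_right_mono) (simp_all add: algebra_simps)
    also have "\<dots> = L * d\<^sup>2 * (s2 - s1)" using that by (simp add: abs_mult power2_eq_square)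
    finally show ?thesis by (simp add: algebra_simps)
  qed
  from semiconcave_interpolation[of "\<lambda>s. V (x + s * d)", OF deriv this assms] show ?thesis
    by (simp add: mult.commute)
qed

definition m :: "real \<Rightarrow> real" where
  "m x = exp (- V x)"

lemma m_pos: "0 < m x"
  by (simp add: m_def)

sublocale m: positive_density m
proof
  show "m \<in> borel_measurable borel" unfolding m_def by measurable
  show "(\<integral>\<^sup>+x. ennreal (m x) \<partial>lborel) = 1"
    using nn_integral_has_integral_lebesgue[OF _ exp_minus_has_integral] by (simp add: m_def)
qed (rule m_pos)

lemma interval_length_le:
  assumes "a \<le> b" and le: "\<And>x. x \<in> {a..b} \<Longrightarrow> V x \<le> v"
  shows "exp (- v) * (b - a) \<le> 1"
proof -
  have "ennreal (exp (- v) * (b - a)) = (\<integral>\<^sup>+x. ennreal (exp (- v)) * indicator {a..b} x \<partial>lborel)"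
    using assms(1) by (simp add: nn_integral_cmult_indicator ennreal_mult')
  also have "\<dots> \<le> (\<integral>\<^sup>+x. ennreal (m x) \<partial>lborel)"
    by (rule nn_integral_mono) (auto simp: indicator_def m_def le)
  finally show ?thesis by (simp add: m.nn_integral)
qed

lemma exists_deriv_V_neg: "\<exists>x0. deriv V x0 < 0"
proof (rule ccontr)
  assume no_x: "\<not> ?thesis"
  have "V x \<le> V 0" if "x \<le> 0" for x
  proof -
    have "0 \<le> deriv V x * (0 - x)" using no_x that by (intro mult_nonneg_nonneg) (auto simp: not_less)
    then show ?thesis using V_above_tangent[of x 0] by linarith
  qed
  obtain n :: nat where n: "exp (V 0) < real n" using reals_Archimedean2 by blast
  have "exp (- V 0) * (0 - - real n) \<le> 1"
    by (rule interval_length_le) (auto intro: \<open>\<And>x. x \<le> 0 \<Longrightarrow> V x \<le> V 0\<close>)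
  with n show False by (simp add: exp_minus field_simps)
qed

lemma exists_deriv_V_pos: "\<exists>x1. 0 < deriv V x1"
proof (rule ccontr)
  assume no_x: "\<not> ?thesis"
  have "V x \<le> V 0" if "0 \<le> x" for x
  proof -
    have "0 \<le> deriv V x * (0 - x)" using no_x that by (intro mult_nonpos_nonpos) (auto simp: not_less)
    then show ?thesis using V_above_tangent[of x 0] by linarith
  qed
  obtain n :: nat where n: "exp (V 0) < real n" using reals_Archimedean2 by blast
  have "exp (- V 0) * (real n - 0) \<le> 1"
    by (rule interval_length_le) (auto intro: \<open>\<And>x. 0 \<le> x \<Longrightarrow> V x \<le> V 0\<close>)
  with n show False by (simp add: exp_minus field_simps)
qed

lemma F_left_tail:
  assumes "y \<le> w" "w \<le> x0"
  shows "m.F y \<le> exp (deriv V x0 * (w - y)) * m.F w"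
proof -
  define s where "s = w - y"
  have s: "s \<ge> 0" using assms by (simp add: s_def)
  have "ennreal (m.F y) = (\<integral>\<^sup>+z. ennreal (m z) * indicator {..y} z \<partial>lborel)"
    by (simp add: m.emeasure_atMost[symmetric] m.emeasure_law)
  also have "\<dots> = (\<integral>\<^sup>+x. ennreal (m (x - s)) * indicator {..w} x \<partial>lborel)"
    using nn_integral_real_affine[of "\<lambda>z. ennreal (m z) * indicator {..y} z" 1 "- s"]
    by (simp add: s_def indicator_def algebra_simps)
  also have "\<dots> \<le> (\<integral>\<^sup>+x. ennreal (exp (deriv V x0 * s)) * (ennreal (m x) * indicator {..w} x) \<partial>lborel)"
  proof (rule nn_integral_mono)
    fix x
    show "ennreal (m (x - s)) * indicator {..w} x \<le> ennreal (exp (deriv V x0 * s)) * (ennreal (m x) * indicator {..w} x)"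
    proof (cases "x \<le> w")
      case True
      have "deriv V x * (- s) \<le> V (x - s) - V x" using V_above_tangent[of x "x - s"] by simp
      moreover have "deriv V x * s \<le> deriv V x0 * s" using True assms s by (intro mult_right_mono deriv_V_mono) auto
      ultimately have "m (x - s) \<le> exp (deriv V x0 * s) * m x"
        by (simp add: m_def mult_exp_exp)
      with True show ?thesis by (simp add: ennreal_mult'[symmetric] ennreal_leI)
    qed simp
  qed
  also have "\<dots> = ennreal (exp (deriv V x0 * s)) * ennreal (m.F w)"
    by (subst nn_integral_cmult) (auto simp: m.emeasure_atMost[symmetric] m.emeasure_law)
  finally show ?thesis
    by (simp add: s_def ennreal_mult'[symmetric] m.F_pos less_imp_le)
qed

lemma F_right_tail:
  assumes "x1 \<le> w" "w \<le> y"
  shows "1 - m.F y \<le> exp (- deriv V x1 * (y - w)) * (1 - m.F w)"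
proof -
  define s where "s = y - w"
  have s: "s \<ge> 0" using assms by (simp add: s_def)
  have "ennreal (1 - m.F y) = (\<integral>\<^sup>+z. ennreal (m z) * indicator {y<..} z \<partial>lborel)"
    by (simp add: m.emeasure_greaterThan[symmetric] m.emeasure_law)
  also have "\<dots> = (\<integral>\<^sup>+x. ennreal (m (x + s)) * indicator {w<..} x \<partial>lborel)"
    using nn_integral_real_affine[of "\<lambda>z. ennreal (m z) * indicator {y<..} z" 1 s]
    by (simp add: s_def indicator_def algebra_simps)
  also have "\<dots> \<le> (\<integral>\<^sup>+x. ennreal (exp (- deriv V x1 * s)) * (ennreal (m x) * indicator {w<..} x) \<partial>lborel)"
  proof (rule nn_integral_mono)
    fix x
    show "ennreal (m (x + s)) * indicator {w<..} x \<le> ennreal (exp (- deriv V x1 * s)) * (ennreal (m x) * indicator {w<..} x)"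
    proof (cases "w < x")
      case True
      have "deriv V x * s \<le> V (x + s) - V x" using V_above_tangent[of x "x + s"] by simp
      moreover have "deriv V x1 * s \<le> deriv V x * s" using True assms s by (intro mult_right_mono deriv_V_mono) auto
      ultimately have "m (x + s) \<le> exp (- deriv V x1 * s) * m x"
        by (simp add: m_def mult_exp_exp)
      with True show ?thesis by (simp add: ennreal_mult'[symmetric] ennreal_leI)
    qed simp
  qed
  also have "\<dots> = ennreal (exp (- deriv V x1 * s)) * ennreal (1 - m.F w)"
    by (subst nn_integral_cmult) (auto simp: m.emeasure_greaterThan[symmetric] m.emeasure_law)
  finally show ?thesis
    using m.F_less_1[of w] by (simp add: s_def ennreal_mult'[symmetric])
qed

lemma left_tail_gap:
  assumes "a \<le> w" "w \<le> b" "w \<le> x0" "deriv V x0 < 0" and F_ratio: "m.F b \<le> K * m.F a"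
  shows "w - a \<le> ln K / - deriv V x0"
proof (rule le_ln_divide_of_le_exp)
  have "m.F a \<le> exp (deriv V x0 * (w - a)) * m.F w"
    using assms by (intro F_left_tail) auto
  also have "\<dots> \<le> exp (deriv V x0 * (w - a)) * (K * m.F a)"
    using m.F_le_iff[of w b] assms by (intro mult_left_mono) auto
  finally show "m.F a \<le> exp (- (- deriv V x0 * (w - a))) * (K * m.F a)" by simp
qed (use assms m.F_pos in auto)

lemma right_tail_gap:
  assumes "a \<le> w" "w \<le> b" "x1 \<le> w" "0 < deriv V x1" and S_ratio: "1 - m.F a \<le> K * (1 - m.F b)"
  shows "b - w \<le> ln K / deriv V x1"
proof (rule le_ln_divide_of_le_exp)
  have "1 - m.F b \<le> exp (- deriv V x1 * (b - w)) * (1 - m.F w)"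
    using assms by (intro F_right_tail) auto
  also have "\<dots> \<le> exp (- deriv V x1 * (b - w)) * (K * (1 - m.F b))"
    using m.F_le_iff[of a w] assms by (intro mult_left_mono) auto
  finally show "1 - m.F b \<le> exp (- (deriv V x1 * (b - w))) * (K * (1 - m.F b))" by simp
qed (use assms m.F_less_1 in auto)

lemma gap_bound:
  assumes x0: "deriv V x0 < 0" and x1: "0 < deriv V x1" and "a \<le> b"
    and F_ratio: "m.F b \<le> K * m.F a" and S_ratio: "1 - m.F a \<le> K * (1 - m.F b)"
  shows "b - a \<le> 2 * max 0 (max (ln K / - deriv V x0) (ln K / deriv V x1)) + \<bar>x1 - x0\<bar>"
proof -
  define E where "E = max 0 (max (ln K / - deriv V x0) (ln K / deriv V x1))"
  have E: "0 \<le> E" by (simp add: E_def)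
  have right: "b - w \<le> E" if "a \<le> w" "x1 \<le> w" for w
  proof (cases "w \<le> b")
    case True
    then have "b - w \<le> ln K / deriv V x1" using that x1 S_ratio by (intro right_tail_gap) auto
    then show ?thesis by (simp add: E_def le_max_iff_disj)
  qed (use E in auto)
  have left: "w - a \<le> E" if "w \<le> b" "w \<le> x0" for w
  proof (cases "a \<le> w")
    case True
    then have "w - a \<le> ln K / - deriv V x0" using that x0 F_ratio by (intro left_tail_gap) auto
    then show ?thesis by (simp add: E_def le_max_iff_disj)
  qed (use E in auto)
  consider "x1 \<le> a" | "b \<le> x0" | "a < x1" "x0 < b" by linarith
  then have "b - a \<le> 2 * E + \<bar>x1 - x0\<bar>"
  proof cases
    case 1
    then have "b - a \<le> E" by (intro right) auto
    with E show ?thesis by linarith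
  next
    case 2
    then have "b - a \<le> E" using \<open>a \<le> b\<close> by (intro left) auto
    with E show ?thesis by linarith
  next
    case 3
    then have "b - x1 \<le> E" "x0 - a \<le> E" by (intro right left; simp)+
    then show ?thesis by linarith
  qed
  then show ?thesis by (simp add: E_def)
qed

lemma cdf_ratio_bounded_imp_gap_bounded:
  "\<exists>D. \<forall>a b. a \<le> b \<longrightarrow> m.F b \<le> K * m.F a \<longrightarrow> 1 - m.F a \<le> K * (1 - m.F b) \<longrightarrow> b - a \<le> D"
proof -
  obtain x0 x1 where "deriv V x0 < 0" "0 < deriv V x1"
    using exists_deriv_V_neg exists_deriv_V_pos by blast
  then show ?thesis using gap_bound by blast
qed

end

(* With q = p / (p - 1) and Z = q L D, exp Z (q^2 L^2 + q L) bounds the concavity defect of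
   exp (q (V (x + t d) - V x)), and (p - 1) B^p exp (p Z) the slope of l^p v^(1 - p) in v. *)
definition semiconvexity_constant :: "real \<Rightarrow> real \<Rightarrow> real \<Rightarrow> real \<Rightarrow> real" where
  "semiconvexity_constant p L B D = B powr p * (p - 1) * exp ((p + 1) * (p / (p - 1)) * L * D)
    * ((p / (p - 1))\<^sup>2 * L\<^sup>2 + p / (p - 1) * L)"

lemma semiconvexity_constant_nonneg:
  "1 < p \<Longrightarrow> 0 \<le> L \<Longrightarrow> 0 \<le> semiconvexity_constant p L B D"
  by (simp add: semiconvexity_constant_def)

context potential
begin

lemma abs_V_increment_le:
  assumes t: "t \<in> {0..1}" and d: "\<bar>d\<bar> \<le> D"
  shows "\<bar>V (x + t * d) - V x\<bar> \<le> L * D"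
proof -
  have "\<bar>t * d\<bar> \<le> D" using t d mult_mono[of t 1 "\<bar>d\<bar>" D] by (auto simp: abs_mult)
  then have "L * \<bar>t * d\<bar> \<le> L * D" using L_nonneg by (rule mult_left_mono)
  with abs_V_diff_le[of "x + t * d" x] show ?thesis by simp
qed

lemma exp_V_increment_semiconcave:
  assumes q: "0 < q" and t: "t \<in> {0..1}" and d: "\<bar>d\<bar> \<le> D"
  shows "(1 - t) + t * exp (q * (V (x + d) - V x))
      - t * (1 - t) * d\<^sup>2 * exp (q * L * D) * (q\<^sup>2 * L\<^sup>2 + q * L) / 2
    \<le> exp (q * (V (x + t * d) - V x))"
proof -
  define z Z where "z = q * (V (x + d) - V x)" and "Z = q * L * D"
  define e where "e = q * L * d\<^sup>2 / 2 * t * (1 - t)"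
  have e: "0 \<le> e" using q t L_nonneg by (simp add: e_def)
  have z_le: "\<bar>z\<bar> \<le> q * (L * \<bar>d\<bar>)"
    using abs_V_diff_le[of "x + d" x] q by (simp add: z_def abs_mult)
  have "\<bar>z\<bar> \<le> q * (L * D)"
    using abs_V_increment_le[of 1 d D x] d q by (simp add: z_def abs_mult)
  then have zZ: "\<bar>z\<bar> \<le> Z" by (simp add: Z_def mult.assoc)
  have z2: "z\<^sup>2 \<le> q\<^sup>2 * L\<^sup>2 * d\<^sup>2"
    using power_mono[OF z_le, of 2] by (simp add: power_mult_distrib)
  have "(1 - t) * V x + t * V (x + d) - L * d\<^sup>2 / 2 * t * (1 - t) \<le> V (x + t * d)"
    using t by (intro V_semiconcave) auto
  from mult_left_mono[OF this less_imp_le[OF q]]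
  have "t * z - e \<le> q * (V (x + t * d) - V x)"
    by (simp add: z_def e_def algebra_simps)
  then have exp_lower: "exp (t * z) * exp (- e) \<le> exp (q * (V (x + t * d) - V x))"
    by (simp add: mult_exp_exp)
  have "t * z \<le> t * \<bar>z\<bar>" using t by (intro mult_left_mono) auto
  also have "\<dots> \<le> 1 * Z" using t zZ by (intro mult_mono) auto
  finally have "exp (t * z) * e \<le> exp Z * e" using e by (intro mult_right_mono) auto
  moreover have "exp (t * z) * (1 - e) \<le> exp (t * z) * exp (- e)"
    using exp_ge_add_one_self[of "- e"] by (intro mult_left_mono) auto
  ultimately have "exp (t * z) - exp Z * e \<le> exp (t * z) * exp (- e)"
    by (simp add: algebra_simps)
  moreover have "(1 - t) + t * exp z - z\<^sup>2 * exp Z / 2 * t * (1 - t) \<le> exp (t * z)"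
    using exp_semiconcave[OF zZ] t by simp
  moreover have "z\<^sup>2 * exp Z / 2 * t * (1 - t) \<le> q\<^sup>2 * L\<^sup>2 * d\<^sup>2 * exp Z / 2 * t * (1 - t)"
    using z2 t by (intro mult_right_mono divide_right_mono) auto
  moreover have "q\<^sup>2 * L\<^sup>2 * d\<^sup>2 * exp Z / 2 * t * (1 - t) + exp Z * e
      = t * (1 - t) * d\<^sup>2 * exp Z * (q\<^sup>2 * L\<^sup>2 + q * L) / 2"
    by (simp add: e_def field_simps power2_eq_square)
  ultimately show ?thesis
    using exp_lower unfolding z_def[symmetric] Z_def[symmetric] by linarith
qed

lemma pointwise_semiconvexity:
  fixes p t j B d D :: real
  assumes p: "1 < p" and t: "t \<in> {0..1}" and j: "0 < j" "j \<le> B" and B: "1 \<le> B"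
    and d: "\<bar>d\<bar> \<le> D"
  shows "((1 - t) + t * j) powr p * exp (p * (V x - V (x + t * d)))
    \<le> (1 - t) + t * (j powr p * exp (p * (V x - V (x + d))))
      + semiconvexity_constant p L B D / 2 * t * (1 - t) * d\<^sup>2"
proof -
  define q Z where "q = p / (p - 1)" and "Z = q * L * D"
  have q: "0 < q" using p by (simp add: q_def)
  define v w l where "v = exp (q * (V (x + t * d) - V x))"
    and "w = (1 - t) + t * exp (q * (V (x + d) - V x))" and "l = (1 - t) + t * j"
  define E where "E = t * (1 - t) * d\<^sup>2 * exp Z * (q\<^sup>2 * L\<^sup>2 + q * L) / 2"
  have "(1 - t) * 1 + t * j \<le> B" using t j B by (intro convex_bound_le) auto
  then have l_le: "l \<le> B" by (simp add: l_def)
  have "0 < l" using t j by (cases "t = 0") (auto simp: l_def intro: add_nonneg_pos)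
  note l = this l_le
  have w: "0 < w" using t by (cases "t = 0") (auto simp: w_def intro: add_nonneg_pos)
  have "q * (- (L * D)) \<le> q * (V (x + t * d) - V x)"
    using abs_V_increment_le[OF t d, of x] q by (intro mult_left_mono) (auto simp: abs_le_iff)
  then have v_lower: "exp (- Z) \<le> v" by (simp add: v_def Z_def mult.assoc)
  have E_bound: "w - v \<le> E"
    using exp_V_increment_semiconcave[OF q t d, of x] by (simp add: v_def w_def E_def Z_def)
  have E_nonneg: "0 \<le> E" using t q L_nonneg by (simp add: E_def)
  have perturb: "l powr p * v powr (1 - p) \<le> l powr p * w powr (1 - p) + B powr p * (p - 1) * exp (p * Z) * E"
    by (rule powr_perturbation_bound[OF p l v_lower w E_bound E_nonneg])
  have "exp (q * (V (x + d) - V x)) powr (1 - p) = exp (p * (V x - V (x + d)))"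
    unfolding q_def exp_conjugate_powr[OF p] by (simp add: algebra_simps)
  then have perspective: "l powr p * w powr (1 - p) \<le> (1 - t) + t * (j powr p * exp (p * (V x - V (x + d))))"
    using perspective_powr_convex[of 1 j 1 "exp (q * (V (x + d) - V x))" t p] j t p
    by (simp add: l_def w_def)
  have "v powr (1 - p) = exp (p * (V x - V (x + t * d)))"
    unfolding v_def q_def exp_conjugate_powr[OF p] by (simp add: algebra_simps)
  then have lhs: "((1 - t) + t * j) powr p * exp (p * (V x - V (x + t * d))) = l powr p * v powr (1 - p)"
    by (simp add: l_def)
  have const: "B powr p * (p - 1) * exp (p * Z) * E = semiconvexity_constant p L B D / 2 * t * (1 - t) * d\<^sup>2"
    by (simp add: semiconvexity_constant_def E_def Z_def q_def[symmetric] mult_exp_exp field_simps)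
  show ?thesis using perturb perspective unfolding lhs const by linarith
qed

end

section \<open>Semiconvexity along the geodesic\<close>

lemma nn_integral_le_linear_combination:
  fixes a b c d :: "'a \<Rightarrow> real" and \<alpha> \<beta> \<gamma> :: real
  assumes [measurable]: "b \<in> borel_measurable M" "c \<in> borel_measurable M" "d \<in> borel_measurable M"
    and nonneg: "\<And>x. 0 \<le> b x" "\<And>x. 0 \<le> c x" "\<And>x. 0 \<le> d x" "0 \<le> \<alpha>" "0 \<le> \<beta>" "0 \<le> \<gamma>"
    and le: "\<And>x. a x \<le> \<alpha> * b x + \<beta> * c x + \<gamma> * d x"
  shows "(\<integral>\<^sup>+x. ennreal (a x) \<partial>M)
    \<le> ennreal \<alpha> * (\<integral>\<^sup>+x. ennreal (b x) \<partial>M) + ennreal \<beta> * (\<integral>\<^sup>+x. ennreal (c x) \<partial>M)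
      + ennreal \<gamma> * (\<integral>\<^sup>+x. ennreal (d x) \<partial>M)"
proof -
  have "(\<integral>\<^sup>+x. ennreal (a x) \<partial>M)
      \<le> (\<integral>\<^sup>+x. ennreal \<alpha> * ennreal (b x) + ennreal \<beta> * ennreal (c x) + ennreal \<gamma> * ennreal (d x) \<partial>M)"
  proof (rule nn_integral_mono)
    fix x
    have "ennreal (a x) \<le> ennreal (\<alpha> * b x + \<beta> * c x + \<gamma> * d x)"
      by (rule ennreal_leI[OF le])
    also have "\<dots> = ennreal \<alpha> * ennreal (b x) + ennreal \<beta> * ennreal (c x) + ennreal \<gamma> * ennreal (d x)"
      using nonneg by (simp add: ennreal_mult)
    finally show "ennreal (a x) \<le> \<dots>" .
  qed
  also have "\<dots> = ennreal \<alpha> * (\<integral>\<^sup>+x. ennreal (b x) \<partial>M) + ennreal \<beta> * (\<integral>\<^sup>+x. ennreal (c x) \<partial>M)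
      + ennreal \<gamma> * (\<integral>\<^sup>+x. ennreal (d x) \<partial>M)"
    by (simp add: nn_integral_add nn_integral_cmult)
  finally show ?thesis .
qed

locale comparable_density = potential V L for V L +
  fixes c C :: real and f :: "real \<Rightarrow> real"
  assumes f_measurable[measurable]: "f \<in> borel_measurable borel"
    and f_has_integral: "(f has_integral 1) UNIV"
    and f_bounds: "\<And>x. c * m x \<le> f x \<and> f x \<le> C * m x"
    and c_pos: "0 < c" and c_less_C: "c < C"
begin

lemma f_pos: "0 < f x"
  using f_bounds[of x] c_pos m_pos[of x] by (meson mult_pos_pos order_less_le_trans)

sublocale f: positive_density f
proof
  show "(\<integral>\<^sup>+x. ennreal (f x) \<partial>lborel) = 1"
    using nn_integral_has_integral_lebesgue[OF _ f_has_integral] f_pos by (simp add: less_imp_le)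
qed (simp_all add: f_pos)

sublocale monotone_transport m f
  by (intro monotone_transport.intro m.positive_density_axioms f.positive_density_axioms)

lemma measure_f_law_bounds:
  assumes A: "A \<in> sets borel"
  shows "c * measure m.law A \<le> measure f.law A" and "measure f.law A \<le> C * measure m.law A"
proof -
  have C_pos: "0 < C" using c_pos c_less_C by simp
  have "ennreal k * emeasure m.law A = (\<integral>\<^sup>+x. ennreal (k * m x) * indicator A x \<partial>lborel)" if "0 \<le> k" for k
    using A that m_pos by (simp add: m.emeasure_law nn_integral_cmult[symmetric] ennreal_mult' mult.assoc less_imp_le)
  moreover have "(\<integral>\<^sup>+x. ennreal (c * m x) * indicator A x \<partial>lborel) \<le> emeasure f.law A"
    "emeasure f.law A \<le> (\<integral>\<^sup>+x. ennreal (C * m x) * indicator A x \<partial>lborel)"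
    using A f_bounds by (auto simp: f.emeasure_law intro!: nn_integral_mono mult_right_mono ennreal_leI)
  ultimately have "ennreal c * emeasure m.law A \<le> emeasure f.law A" "emeasure f.law A \<le> ennreal C * emeasure m.law A"
    using c_pos C_pos by auto
  then show "c * measure m.law A \<le> measure f.law A" "measure f.law A \<le> C * measure m.law A"
    using c_pos C_pos
    by (simp_all add: m.law.emeasure_eq_measure f.law.emeasure_eq_measure ennreal_mult'[symmetric])
qed

lemma abs_T_minus_le:
  assumes gap: "\<And>a b. a \<le> b \<Longrightarrow> m.F b \<le> max C (1 / c) * m.F a
      \<Longrightarrow> 1 - m.F a \<le> max C (1 / c) * (1 - m.F b) \<Longrightarrow> b - a \<le> D"
  shows "\<bar>T x - x\<bar> \<le> D"
proof -
  define K where "K = max C (1 / c)"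
  have f_le: "f.F y \<le> K * m.F y" "1 - f.F y \<le> K * (1 - m.F y)" for y
    using measure_f_law_bounds(2)[of "{..y}"] measure_f_law_bounds(2)[of "{y<..}"] m.F_pos[of y] m.F_less_1[of y]
    by (auto simp: K_def m.measure_atMost f.measure_atMost m.measure_greaterThan f.measure_greaterThan
        intro: order_trans[OF _ mult_right_mono])
  have m_le: "m.F y \<le> K * f.F y" "1 - m.F y \<le> K * (1 - f.F y)" for y
  proof -
    have "c * m.F y \<le> f.F y" "c * (1 - m.F y) \<le> 1 - f.F y"
      using measure_f_law_bounds(1)[of "{..y}"] measure_f_law_bounds(1)[of "{y<..}"]
      by (simp_all add: m.measure_atMost f.measure_atMost m.measure_greaterThan f.measure_greaterThan)
    then have "m.F y \<le> 1 / c * f.F y" "1 - m.F y \<le> 1 / c * (1 - f.F y)"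
      using c_pos by (simp_all add: field_simps)
    moreover have "1 / c * f.F y \<le> K * f.F y" "1 / c * (1 - f.F y) \<le> K * (1 - f.F y)"
      using f.F_pos[of y] f.F_less_1[of y] by (intro mult_right_mono; simp add: K_def)+
    ultimately show "m.F y \<le> K * f.F y" "1 - m.F y \<le> K * (1 - f.F y)" by linarith+
  qed
  show ?thesis
  proof (cases "T x \<le> x")
    case True
    then have "x - T x \<le> D"
      using gap[of "T x" x] f_le[of "T x"] m_le[of "T x"] by (simp add: K_def)
    with True show ?thesis by simp
  next
    case False
    then have "T x - x \<le> D"
      using gap[of x "T x"] f_le[of "T x"] m_le[of "T x"] by (simp add: K_def)
    with False show ?thesis by simp
  qed
qed

lemma jac_le:
  assumes "\<bar>T x - x\<bar> \<le> D"
  shows "jac x \<le> exp (L * D) / c"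
proof -
  have "jac x \<le> m x / (c * m (T x))"
    unfolding jac_def using f_bounds[of "T x"] m_pos c_pos f_pos
    by (intro divide_left_mono) (auto simp: less_imp_le)
  also have "\<dots> = exp (V (T x) - V x) / c"
    using c_pos by (simp add: m_def exp_diff exp_minus field_simps)
  also have "\<dots> \<le> exp (L * D) / c"
  proof -
    have "V (T x) - V x \<le> L * \<bar>T x - x\<bar>" using abs_V_diff_le[of "T x" x] by simp
    also have "\<dots> \<le> L * D" using assms L_nonneg by (intro mult_left_mono)
    finally show ?thesis using c_pos by (simp add: divide_right_mono)
  qed
  finally show ?thesis .
qed

definition weight :: "real \<Rightarrow> real \<Rightarrow> real \<Rightarrow> real" where
  "weight r t x = geo_jac t x powr (r + 1) * exp ((r + 1) * (V x - V (geo t x)))"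

lemma weight_measurable[measurable]: "weight r t \<in> borel_measurable borel"
  unfolding weight_def by measurable

lemma weight_0: "weight r 0 x = 1"
  by (simp add: weight_def geo_jac_def geo_def)

lemma Frho_distr_geo_eq_weight:
  assumes t: "t \<in> {0..1}"
  shows "Frho r (\<lambda>x. exp (- (r + 1) * V x)) (distr m.law lborel (geo t))
       = (\<integral>\<^sup>+x. ennreal (m x * weight r t x) \<partial>lborel)"
proof -
  have "geo_jac t x * (exp (- (r + 1) * V (geo t x)) / (m x / geo_jac t x) powr r) = m x * weight r t x" for x
  proof -
    define J a b where "J = geo_jac t x" and "a = V x" and "b = V (geo t x)"
    have J: "0 < J" using geo_jac_pos[OF t] by (simp add: J_def)
    have "exp (- a) powr r = exp (- (r * a))" by (simp add: powr_def)
    then have m_powr: "(m x / J) powr r = exp (- (r * a)) / J powr r"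
      using J by (simp add: m_def a_def powr_divide less_imp_le)
    have "J * (exp (- (r + 1) * b) / (m x / J) powr r)
        = (J * J powr r) * (exp (- (r + 1) * b) / exp (- (r * a)))"
      unfolding m_powr using J by (simp add: field_simps)
    also have "J * J powr r = J powr (r + 1)" using J by (simp add: powr_add)
    also have "exp (- (r + 1) * b) / exp (- (r * a)) = exp (- a) * exp ((r + 1) * (a - b))"
      by (simp add: exp_diff[symmetric] mult_exp_exp algebra_simps)
    finally show ?thesis by (simp add: weight_def m_def J_def a_def b_def)
  qed
  then show ?thesis by (simp add: Frho_distr_geo[OF t])
qed

lemma weight_semiconvex:
  assumes r: "1 < r" and t: "t \<in> {0..1}" and D: "\<bar>T x - x\<bar> \<le> D" and B: "exp (L * D) / c \<le> B" "1 \<le> B"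
  shows "weight r t x \<le> (1 - t) * weight r 0 x + t * weight r 1 x
    + semiconvexity_constant (r + 1) L B D / 2 * t * (1 - t) * (x - T x)\<^sup>2"
proof -
  have "x + t * (T x - x) = geo t x" "x + (T x - x) = T x" by (simp_all add: geo_def algebra_simps)
  with pointwise_semiconvexity[of "r + 1" t "jac x" B "T x - x" D x] r t jac_pos[of x] jac_le[OF D] B D
  show ?thesis unfolding weight_0 by (simp add: weight_def geo_jac_def geo_1 power2_commute)
qed

lemma Frho_geodesic_le:
  fixes r t D B :: real
  defines "\<rho> \<equiv> \<lambda>x. exp (- (r + 1) * V x)"
  assumes r: "1 < r" and t: "t \<in> {0..1}" and D: "\<And>x. \<bar>T x - x\<bar> \<le> D" and B: "exp (L * D) / c \<le> B" "1 \<le> B"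
  shows "Frho r \<rho> (distr m.law lborel (geo t))
    \<le> ennreal (1 - t) * Frho r \<rho> m.law + ennreal t * Frho r \<rho> f.law
      + ennreal (semiconvexity_constant (r + 1) L B D / 2 * t * (1 - t)) * W2sq m.law f.law"
proof -
  define K where "K = semiconvexity_constant (r + 1) L B D / 2 * t * (1 - t)"
  have K: "0 \<le> K" using r t L_nonneg semiconvexity_constant_nonneg[of "r + 1" L B D] by (simp add: K_def)
  have "m x * weight r t x \<le> (1 - t) * (m x * weight r 0 x) + t * (m x * weight r 1 x) + K * ((x - T x)\<^sup>2 * m x)" for x
    using mult_left_mono[OF weight_semiconvex[OF r t D B] less_imp_le[OF m_pos]]
    by (simp add: K_def algebra_simps)
  then have "(\<integral>\<^sup>+x. ennreal (m x * weight r t x) \<partial>lborel)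
      \<le> ennreal (1 - t) * (\<integral>\<^sup>+x. ennreal (m x * weight r 0 x) \<partial>lborel)
        + ennreal t * (\<integral>\<^sup>+x. ennreal (m x * weight r 1 x) \<partial>lborel)
        + ennreal K * (\<integral>\<^sup>+x. ennreal ((x - T x)\<^sup>2 * m x) \<partial>lborel)"
    using t K m_pos by (intro nn_integral_le_linear_combination) (auto simp: weight_def less_imp_le)
  also have "(\<integral>\<^sup>+x. ennreal ((x - T x)\<^sup>2 * m x) \<partial>lborel) = (\<integral>\<^sup>+x. ennreal ((x - T x)\<^sup>2) \<partial>m.law)"
    by (simp add: m.law_def nn_integral_density ennreal_mult'' m_pos less_imp_le mult.commute)
  also have "\<dots> \<le> W2sq m.law f.law"
    by (rule nn_integral_T_le_W2sq)
  finally show ?thesis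
    using Frho_distr_geo_eq_weight[of 0 r] Frho_distr_geo_eq_weight[OF t, of r] Frho_distr_geo_eq_weight[of 1 r]
    by (simp add: \<rho>_def K_def distr_geo_0 distr_geo_1 mult_left_mono add_left_mono)
qed

end

theorem proposition2p2:
  fixes r L c C :: real and V :: "real \<Rightarrow> real"
  assumes r: "r > 1"
    and V_convex: "convex_on UNIV V"
    and V_lip: "L-lipschitz_on UNIV V"
    and V_diff: "\<forall>x. V differentiable (at x)"
    and V'_lip: "L-lipschitz_on UNIV (deriv V)"
    and m_prob: "((\<lambda>x. exp (- V x)) has_integral 1) UNIV"
    and cC: "0 < c" "c < C"
  shows "\<exists>lam\<ge>0. \<forall>f \<in> Pcc (\<lambda>x. exp (- V x)) c C. \<forall>t \<in> {0..1}.
     Frho r (\<lambda>x. exp (- (r + 1) * V x))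
        (w2_geodesic (density lborel (\<lambda>x. exp (- V x))) (density lborel f) t)
     \<le> ennreal (1 - t) * Frho r (\<lambda>x. exp (- (r + 1) * V x)) (density lborel (\<lambda>x. exp (- V x)))
       + ennreal t * Frho r (\<lambda>x. exp (- (r + 1) * V x)) (density lborel f)
       + ennreal (lam / 2 * t * (1 - t)) * W2sq (density lborel (\<lambda>x. exp (- V x))) (density lborel f)"
proof -
  interpret potential V L
    using assms by unfold_locales auto
  obtain D where D: "\<And>a b. a \<le> b \<Longrightarrow> m.F b \<le> max C (1 / c) * m.F a
      \<Longrightarrow> 1 - m.F a \<le> max C (1 / c) * (1 - m.F b) \<Longrightarrow> b - a \<le> D"
    using cdf_ratio_bounded_imp_gap_bounded[of "max C (1 / c)"] by blast
  define B where "B = max 1 (exp (L * D) / c)"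
  define lam where "lam = semiconvexity_constant (r + 1) L B D"
  let ?\<rho> = "\<lambda>x. exp (- (r + 1) * V x)" and ?m = "density lborel (\<lambda>x. exp (- V x))"
  have "Frho r ?\<rho> (w2_geodesic ?m (density lborel f) t)
     \<le> ennreal (1 - t) * Frho r ?\<rho> ?m + ennreal t * Frho r ?\<rho> (density lborel f)
       + ennreal (lam / 2 * t * (1 - t)) * W2sq ?m (density lborel f)"
    if f: "f \<in> Pcc (\<lambda>x. exp (- V x)) c C" and t: "t \<in> {0..1}" for f t
  proof -
    interpret comparable_density V L c C f
      using f cC by unfold_locales (auto simp: Pcc_def m_def)
    have "w2_geodesic m.law f.law t = distr m.law lborel (geo t)"
      by (simp add: w2_geodesic_def geo_def[abs_def] T_def)
    with Frho_geodesic_le[OF r t abs_T_minus_le[OF D], of B] show ?thesis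
      by (simp add: B_def lam_def m.law_def f.law_def m_def)
  qed
  moreover have "0 \<le> lam"
    using r L_nonneg by (simp add: lam_def semiconvexity_constant_nonneg)
  ultimately show ?thesis by blast
qed

end
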